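(* Let $f$ be a spectral density on $\Lambda$ and $\lambda_{1,n}(f)$ the smallest eigenvalue of $T_n(f)$. (a) If $\overline{E_f}=\Gamma_{2\alpha}(\theta_0)$ with $0<\alpha<\pi$, then $\limsup_{n\to\infty}\sqrt[n]{\lambda_{1,n}(f)}\le\sin^2(\alpha/2)$. (b) If $\overline{E_f}=\Gamma_{\alpha,\delta}(\theta_0)$ with $\alpha>0$, $\delta\ge0$, $\alpha+\delta\le\pi$, then $\limsup_{n\to\infty}\sqrt[n]{\lambda_{1,n}(f)}\le\sin(\alpha/2)\sin(\alpha/2+\delta)$.
   Context: $\Lambda=[-\pi,\pi]$. A spectral density is $f\ge0$, $f\in L^1(\Lambda)$, positive on a set of positive measure; $r(t)=\int_\Lambda e^{-it\lambda}f(\lambda)d\lambda$; $T_n(f)=(r(k-j))_{j,k=0,\dots,n}$. $E_f=\{e^{i\lambda}:f(\lambda)>0\}$ with closure $\overline{E_f}$ (the support of $f$ on the unit circle). For $\theta_0\in[-\pi,\pi)$: $\Gamma_{2\alpha}(\theta_0)=\{e^{i\theta}:|\theta-\theta_0|\le\alpha\}$; $\Gamma_{\alpha,\delta}(\theta_0)=\{e^{i\theta}:\delta\le|\theta-\theta_0|\le\delta+\alpha\}$. *)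

theory Defs
  imports "HOL-Analysis.Analysis" "Jordan_Normal_Form.Char_Poly"
begin

definition spectral_density :: "(real \<Rightarrow> real) \<Rightarrow> bool" where
  "spectral_density f \<longleftrightarrow>
     (\<forall>l\<in>{-pi..pi}. 0 \<le> f l) \<and>
     set_integrable lborel {-pi..pi} f \<and>
     emeasure lborel {l\<in>{-pi..pi}. 0 < f l} > 0"

definition covar :: "(real \<Rightarrow> real) \<Rightarrow> int \<Rightarrow> complex" where
  "covar f t = (LINT l:{-pi..pi}|lborel. cis (- real_of_int t * l) * complex_of_real (f l))"

definition toeplitz :: "nat \<Rightarrow> (real \<Rightarrow> real) \<Rightarrow> complex mat" where
  "toeplitz n f = mat (n+1) (n+1) (\<lambda>(j,k). covar f (int k - int j))"

text \<open>Smallest eigenvalue lambda_{1,n}(f) of the Hermitian matrix T_n(f)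
  (all its eigenvalues are real).\<close>
definition min_eig :: "nat \<Rightarrow> (real \<Rightarrow> real) \<Rightarrow> real" where
  "min_eig n f = Min {x::real. eigenvalue (toeplitz n f) (complex_of_real x)}"

definition E_set :: "(real \<Rightarrow> real) \<Rightarrow> complex set" where
  "E_set f = {cis l | l. l \<in> {-pi..pi} \<and> 0 < f l}"

definition Gamma_arc :: "real \<Rightarrow> real \<Rightarrow> complex set" where
  "Gamma_arc \<alpha> \<theta>0 = {cis \<theta> | \<theta>. \<bar>\<theta> - \<theta>0\<bar> \<le> \<alpha>}"

definition Gamma_two_arcs :: "real \<Rightarrow> real \<Rightarrow> real \<Rightarrow> complex set" where
  "Gamma_two_arcs \<alpha> \<delta> \<theta>0 = {cis \<theta> | \<theta>. \<delta> \<le> \<bar>\<theta> - \<theta>0\<bar> \<and> \<bar>\<theta> - \<theta>0\<bar> \<le> \<delta> + \<alpha>}"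

end

theory Submission
  imports Defs
begin

text \<open>The quadratic form of \<open>T\<^sub>n(f)\<close> is \<open>v \<mapsto> \<integral> f(\<lambda>) |p\<^sub>v(e\<^bsup>-i\<lambda>\<^esup>)|\<^sup>2 d\<lambda>\<close>, where \<open>p\<^sub>v\<close> is the
  polynomial with coefficient vector \<open>v\<close>, so \<open>\<lambda>\<^bsub>1,n\<^esub>(f) \<parallel>v\<parallel>\<^sup>2 \<le> \<integral> f\<close> as soon as \<open>|p\<^sub>v| \<le> 1\<close> on the
  support of \<open>f\<close>. On \<open>\<Gamma>\<^bsub>\<alpha>,\<delta>\<^esub>(\<theta>\<^sub>0)\<close> the value \<open>cos (\<theta> - \<theta>\<^sub>0)\<close> ranges over \<open>[c - r, c + r]\<close> with
  \<open>r = sin (\<alpha>/2) sin (\<alpha>/2 + \<delta>)\<close>; the Chebyshev polynomial \<open>T\<^sub>k((z + 1/z - 2c) / (2r))\<close>, multiplied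
  by \<open>z\<^sup>k\<close> and rotated by \<open>\<theta>\<^sub>0\<close>, is bounded by 1 there and has leading coefficient of modulus
  \<open>1 / (2 r\<^sup>k)\<close>. Hence \<open>\<lambda>\<^bsub>1,n\<^esub>(f) \<le> 4 (\<integral> f) r\<^bsup>2\<lfloor>n/2\<rfloor>\<^esup>\<close>, whose \<open>n\<close>-th root tends to \<open>r\<close>.
  A single arc is the case \<open>\<delta> = 0\<close>.\<close>

definition sesq_form ::
    "(nat \<Rightarrow> nat \<Rightarrow> complex) \<Rightarrow> nat \<Rightarrow> (nat \<Rightarrow> complex) \<Rightarrow> (nat \<Rightarrow> complex) \<Rightarrow> complex" where
  "sesq_form a N x y = (\<Sum>j<N. \<Sum>k<N. cnj (x j) * a j k * y k)"

definition sq_norm :: "nat \<Rightarrow> (nat \<Rightarrow> complex) \<Rightarrow> real" where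
  "sq_norm N x = (\<Sum>i<N. (cmod (x i))\<^sup>2)"

lemma sesq_form_add_left: "sesq_form a N (\<lambda>i. x i + y i) z = sesq_form a N x z + sesq_form a N y z"
  unfolding sesq_form_def by (simp add: distrib_right sum.distrib)

lemma sesq_form_add_right: "sesq_form a N x (\<lambda>i. y i + z i) = sesq_form a N x y + sesq_form a N x z"
  unfolding sesq_form_def by (simp add: distrib_left sum.distrib)

lemma sesq_form_scale_left: "sesq_form a N (\<lambda>i. c * x i) y = cnj c * sesq_form a N x y"
  unfolding sesq_form_def by (simp add: sum_distrib_left mult_ac)

lemma sesq_form_scale_right: "sesq_form a N x (\<lambda>i. c * y i) = c * sesq_form a N x y"
  unfolding sesq_form_def by (simp add: sum_distrib_left mult_ac)

lemma sesq_form_diff_kernel: "sesq_form (\<lambda>j k. a j k - b j k) N x y = sesq_form a N x y - sesq_form b N x y"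
  unfolding sesq_form_def by (simp add: algebra_simps sum_subtractf)

lemma sesq_form_cong:
  "(\<And>i. i < N \<Longrightarrow> x i = x' i) \<Longrightarrow> (\<And>i. i < N \<Longrightarrow> y i = y' i) \<Longrightarrow>
   sesq_form a N x y = sesq_form a N x' y'"
  unfolding sesq_form_def by (intro sum.cong refl) auto

lemma sesq_form_apply: "sesq_form a N x y = (\<Sum>j<N. cnj (x j) * (\<Sum>k<N. a j k * y k))"
  unfolding sesq_form_def by (simp add: sum_distrib_left mult.assoc)

lemma sesq_form_cnj_swap:
  assumes "\<And>j k. cnj (a j k) = a k j"
  shows "sesq_form a N y x = cnj (sesq_form a N x y)"
proof -
  have "cnj (sesq_form a N x y) = (\<Sum>j<N. \<Sum>k<N. cnj (y k) * a k j * x j)"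
    unfolding sesq_form_def by (simp add: assms mult_ac)
  also have "\<dots> = sesq_form a N y x"
    unfolding sesq_form_def by (rule sum.swap)
  finally show ?thesis by simp
qed

lemma sum_cnj_mult_self: "(\<Sum>i<N. cnj (x i) * x i) = complex_of_real (sq_norm N x)"
  unfolding sq_norm_def of_real_sum by (intro sum.cong refl) (simp add: complex_norm_square[symmetric] mult.commute)

lemma sesq_form_diagonal:
  "sesq_form (\<lambda>j k. if j = k then c else 0) N x x = c * complex_of_real (sq_norm N x)"
proof -
  have "sesq_form (\<lambda>j k. if j = k then c else 0) N x x = (\<Sum>j<N. cnj (x j) * c * x j)"
    unfolding sesq_form_def by (simp add: if_distrib if_distribR cong: if_cong)
  then show ?thesis by (simp add: sum_cnj_mult_self[symmetric] sum_distrib_left mult_ac)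
qed

lemma sq_norm_nonneg: "0 \<le> sq_norm N x"
  unfolding sq_norm_def by (intro sum_nonneg) auto

lemma sq_norm_eq_0_D: "sq_norm N x = 0 \<Longrightarrow> i < N \<Longrightarrow> x i = 0"
  unfolding sq_norm_def by (subst (asm) sum_nonneg_eq_0_iff) auto

lemma sq_norm_scale: "sq_norm N (\<lambda>i. c * x i) = (cmod c)\<^sup>2 * sq_norm N x"
  unfolding sq_norm_def by (simp add: sum_distrib_left norm_mult power_mult_distrib)

lemma real_eq_0_if_linear_le_quadratic:
  fixes \<sigma> Q :: real
  assumes "\<And>t. 0 \<le> 2 * t * \<sigma> + t\<^sup>2 * Q"
  shows "\<sigma> = 0"
proof -
  define c where "c = \<bar>Q\<bar> + 1"
  have c0: "0 < c" unfolding c_def by simp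
  define t where "t = - \<sigma> / c"
  have "0 \<le> 2 * t * \<sigma> + t\<^sup>2 * Q" by (rule assms)
  also have "\<dots> \<le> 2 * t * \<sigma> + t\<^sup>2 * c" unfolding c_def by (intro add_left_mono mult_left_mono) auto
  also have "\<dots> = - \<sigma>\<^sup>2 / c" using c0 unfolding t_def by (simp add: field_simps power2_eq_square)
  finally show ?thesis using c0 by (simp add: divide_le_0_iff)
qed

text \<open>A null vector of a positive semidefinite Hermitian form lies in the kernel:
  otherwise moving from \<open>x\<close> towards \<open>-Bx\<close> would make the form negative.\<close>
lemma psd_null_vector_in_kernel:
  assumes herm: "\<And>j k. cnj (b j k) = b k j"
    and psd: "\<And>y. 0 \<le> Re (sesq_form b N y y)"
    and null: "Re (sesq_form b N x x) = 0"
    and j: "j < N"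
  shows "(\<Sum>k<N. b j k * x k) = 0"
proof -
  define w where "w = (\<lambda>j. \<Sum>k<N. b j k * x k)"
  have "sesq_form b N w x = complex_of_real (sq_norm N w)"
    unfolding sesq_form_apply sum_cnj_mult_self[symmetric] w_def ..
  then have wx: "Re (sesq_form b N w x) = sq_norm N w" by simp
  have xw: "Re (sesq_form b N x w) = sq_norm N w"
    using wx sesq_form_cnj_swap[of b N x w, OF herm] by simp
  have "0 \<le> 2 * t * sq_norm N w + t\<^sup>2 * Re (sesq_form b N w w)" for t
  proof -
    have "0 \<le> Re (sesq_form b N (\<lambda>i. x i + of_real t * w i) (\<lambda>i. x i + of_real t * w i))"
      by (rule psd)
    also have "\<dots> = 2 * t * sq_norm N w + t\<^sup>2 * Re (sesq_form b N w w)"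
      unfolding sesq_form_add_left sesq_form_add_right sesq_form_scale_left sesq_form_scale_right
      using null wx xw by (simp add: power2_eq_square algebra_simps)
    finally show ?thesis .
  qed
  then have "sq_norm N w = 0" by (rule real_eq_0_if_linear_le_quadratic)
  then show ?thesis using sq_norm_eq_0_D j unfolding w_def by blast
qed

lemma continuous_on_coordinate [continuous_intros]: "continuous_on S (\<lambda>x::nat \<Rightarrow> complex. x i)"
  by (rule continuous_on_subset[OF continuous_on_product_coordinates]) simp

text \<open>Vectors of \<open>\<complex>\<^sup>N\<close> are represented by functions vanishing from \<open>N\<close> on.\<close>
definition unit_sphere :: "nat \<Rightarrow> (nat \<Rightarrow> complex) set" where
  "unit_sphere N = {x. sq_norm N x = 1 \<and> (\<forall>i\<ge>N. x i = 0)}"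

lemma sq_cmod_le_sq_norm: "i < N \<Longrightarrow> (cmod (x i))\<^sup>2 \<le> sq_norm N x"
  unfolding sq_norm_def by (intro member_le_sum) auto

lemma compact_unit_sphere: "compact (unit_sphere N)"
proof -
  have "cmod (x i) \<le> 1" if "sq_norm N x = 1" "i < N" for x i
    using sq_cmod_le_sq_norm[OF that(2), of x] that(1) by (simp add: power_le_one_iff)
  then have "unit_sphere N = {x. sq_norm N x = 1} \<inter> Pi UNIV (\<lambda>i. if i < N then cball 0 1 else {0})"
    unfolding unit_sphere_def by (fastforce simp: Pi_iff not_less)
  moreover have "compactin (product_topology (\<lambda>i. euclidean) UNIV)
          (PiE UNIV (\<lambda>i. if i < N then cball (0::complex) 1 else {0}))"
    by (subst compactin_PiE) auto
  then have "compact (Pi UNIV (\<lambda>i. if i < N then cball (0::complex) 1 else {0}))"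
    by (simp add: euclidean_product_topology PiE_UNIV_domain)
  moreover have "closed {x. sq_norm N x = 1}"
    unfolding sq_norm_def by (intro closed_Collect_eq continuous_intros)
  ultimately show ?thesis by (simp add: closed_Int_compact)
qed

lemma unit_sphere_normalize:
  assumes v: "sq_norm N v \<noteq> 0"
  obtains w where "w \<in> unit_sphere N"
    and "sesq_form a N w w = complex_of_real (1 / sq_norm N v) * sesq_form a N v v"
proof
  define u where "u = (\<lambda>i. complex_of_real (1 / sqrt (sq_norm N v)) * v i)"
  define w where "w = (\<lambda>i. if i < N then u i else 0)"
  have uw: "i < N \<Longrightarrow> w i = u i" for i by (simp add: w_def)
  have v0: "0 < sq_norm N v" using v sq_norm_nonneg[of N v] by simp
  have "sq_norm N w = sq_norm N u"
    unfolding sq_norm_def by (intro sum.cong refl) (simp add: uw)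
  also have "\<dots> = 1"
    unfolding u_def sq_norm_scale using v0 by (simp add: norm_divide power_divide)
  finally show "w \<in> unit_sphere N" unfolding unit_sphere_def w_def by simp
  have "sesq_form a N w w = sesq_form a N u u"
    by (rule sesq_form_cong) (simp_all add: uw)
  also have "\<dots> = complex_of_real (1 / sq_norm N v) * sesq_form a N v v"
    unfolding u_def sesq_form_scale_left sesq_form_scale_right using v0
    by (simp add: power_divide flip: of_real_mult)
  finally show "sesq_form a N w w = complex_of_real (1 / sq_norm N v) * sesq_form a N v v" .
qed

lemma sesq_form_attains_min_on_unit_sphere:
  assumes N: "0 < N"
  obtains x where "sq_norm N x = 1" and "\<And>v. Re (sesq_form a N x x) * sq_norm N v \<le> Re (sesq_form a N v v)"
proof -
  define e :: "nat \<Rightarrow> complex" where "e = (\<lambda>i. if i = 0 then 1 else 0)"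
  have "sq_norm N e = (\<Sum>i<N. if i = 0 then 1 else 0)"
    unfolding sq_norm_def e_def by (intro sum.cong) auto
  then have "e \<in> unit_sphere N" using N unfolding unit_sphere_def e_def by auto
  then have "unit_sphere N \<noteq> {}" by blast
  moreover have "continuous_on (unit_sphere N) (\<lambda>x. Re (sesq_form a N x x))"
    unfolding sesq_form_def by (intro continuous_intros)
  ultimately obtain x where x: "x \<in> unit_sphere N"
    and xmin: "\<And>y. y \<in> unit_sphere N \<Longrightarrow> Re (sesq_form a N x x) \<le> Re (sesq_form a N y y)"
    using continuous_attains_inf[OF compact_unit_sphere] by blast
  have min: "Re (sesq_form a N x x) * sq_norm N v \<le> Re (sesq_form a N v v)" for v
  proof (cases "sq_norm N v = 0")
    case True
    then have "sesq_form a N v v = sesq_form a N (\<lambda>_. 0) (\<lambda>_. 0)"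
      by (intro sesq_form_cong) (auto dest: sq_norm_eq_0_D)
    then show ?thesis using True by (simp add: sesq_form_def)
  next
    case False
    then obtain w where "w \<in> unit_sphere N"
      and w: "sesq_form a N w w = complex_of_real (1 / sq_norm N v) * sesq_form a N v v"
      by (rule unit_sphere_normalize)
    then have "Re (sesq_form a N x x) \<le> Re (sesq_form a N v v) / sq_norm N v"
      using xmin[of w] by simp
    then show ?thesis using False sq_norm_nonneg[of N v] by (simp add: pos_le_divide_eq)
  qed
  from x show ?thesis unfolding unit_sphere_def by (blast intro: that min)
qed

lemma hermitian_min_eigenpair:
  assumes N: "0 < N" and herm: "\<And>j k. cnj (a j k) = a k j"
  shows "\<exists>m x. (\<exists>i<N. x i \<noteq> 0) \<and> (\<forall>j<N. (\<Sum>k<N. a j k * x k) = complex_of_real m * x j)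
           \<and> (\<forall>v. m * sq_norm N v \<le> Re (sesq_form a N v v))"
proof -
  obtain x where x1: "sq_norm N x = 1"
    and bound: "\<And>v. Re (sesq_form a N x x) * sq_norm N v \<le> Re (sesq_form a N v v)"
    using sesq_form_attains_min_on_unit_sphere[OF N, where a = a] by blast
  define m where "m = Re (sesq_form a N x x)"
  define b where "b = (\<lambda>j k. a j k - (if j = k then complex_of_real m else 0))"
  have Re_b: "Re (sesq_form b N y y) = Re (sesq_form a N y y) - m * sq_norm N y" for y
    unfolding b_def sesq_form_diff_kernel sesq_form_diagonal by simp
  have kernel: "(\<Sum>k<N. b j k * x k) = 0" if j: "j < N" for j
  proof (rule psd_null_vector_in_kernel[OF _ _ _ j])
    show "cnj (b j k) = b k j" for j k unfolding b_def by (simp add: herm)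
    show "0 \<le> Re (sesq_form b N y y)" for y using bound[of y] unfolding Re_b m_def by simp
    show "Re (sesq_form b N x x) = 0" unfolding Re_b m_def x1 by simp
  qed
  have "(\<Sum>k<N. a j k * x k) = complex_of_real m * x j" if j: "j < N" for j
  proof -
    have "(\<Sum>k<N. b j k * x k) = (\<Sum>k<N. a j k * x k) - (\<Sum>k<N. (if j = k then complex_of_real m else 0) * x k)"
      unfolding b_def left_diff_distrib sum_subtractf ..
    also have "(\<Sum>k<N. (if j = k then complex_of_real m else 0) * x k) = complex_of_real m * x j"
      using j by (simp add: if_distrib if_distribR cong: if_cong)
    finally have "(\<Sum>k<N. b j k * x k) = (\<Sum>k<N. a j k * x k) - complex_of_real m * x j" .
    then show ?thesis using kernel[OF j] by simp
  qed
  moreover have "\<exists>i<N. x i \<noteq> 0"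
  proof (rule ccontr)
    assume "\<not> (\<exists>i<N. x i \<noteq> 0)"
    then have "sq_norm N x = 0" unfolding sq_norm_def by simp
    then show False using x1 by simp
  qed
  moreover have "m * sq_norm N v \<le> Re (sesq_form a N v v)" for v
    using bound unfolding m_def .
  ultimately show ?thesis by blast
qed

lemma cnj_covar: "cnj (covar f t) = covar f (- t)"
proof -
  have "cnj (covar f t) = (LINT l|lborel. cnj (indicator {-pi..pi} l *\<^sub>R (cis (- real_of_int t * l) * complex_of_real (f l))))"
    unfolding covar_def set_lebesgue_integral_def by (rule Bochner_Integration.integral_cnj[symmetric])
  also have "\<dots> = covar f (- t)"
    unfolding covar_def set_lebesgue_integral_def
    by (intro Bochner_Integration.integral_cong refl) (simp add: indicator_def cis_cnj)
  finally show ?thesis .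
qed

lemma toeplitz_carrier_mat: "toeplitz n f \<in> carrier_mat (Suc n) (Suc n)"
  unfolding toeplitz_def by simp

lemma finite_real_eigenvalues_toeplitz: "finite {x::real. eigenvalue (toeplitz n f) (complex_of_real x)}"
proof -
  have "char_poly (toeplitz n f) \<noteq> 0"
    using degree_monic_char_poly[OF toeplitz_carrier_mat[of n f]] by auto
  then have "finite (complex_of_real -` {z. poly (char_poly (toeplitz n f)) z = 0})"
    by (intro finite_vimageI poly_roots_finite) (auto simp: inj_on_def)
  moreover have "{x::real. eigenvalue (toeplitz n f) (complex_of_real x)} \<subseteq>
      complex_of_real -` {z. poly (char_poly (toeplitz n f)) z = 0}"
    using eigenvalue_root_char_poly[OF toeplitz_carrier_mat[of n f]] by auto
  ultimately show ?thesis by (rule finite_subset[rotated])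
qed

lemma eigenvalue_toeplitz_if_eigenvector:
  assumes nz: "\<exists>i<Suc n. x i \<noteq> 0"
    and eig: "\<And>j. j < Suc n \<Longrightarrow> (\<Sum>k<Suc n. covar f (int k - int j) * x k) = complex_of_real m * x j"
  shows "eigenvalue (toeplitz n f) (complex_of_real m)"
proof -
  have "toeplitz n f *\<^sub>v vec (Suc n) x = complex_of_real m \<cdot>\<^sub>v vec (Suc n) x"
  proof (rule eq_vecI)
    fix i assume "i < dim_vec (complex_of_real m \<cdot>\<^sub>v vec (Suc n) x)"
    then have i: "i < Suc n" by simp
    then have "(toeplitz n f *\<^sub>v vec (Suc n) x) $ i = (\<Sum>k<Suc n. covar f (int k - int i) * x k)"
      by (simp add: toeplitz_def scalar_prod_def atLeast0LessThan)
    then show "(toeplitz n f *\<^sub>v vec (Suc n) x) $ i = (complex_of_real m \<cdot>\<^sub>v vec (Suc n) x) $ i"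
      using eig[OF i] i by simp
  qed (simp add: toeplitz_def)
  moreover have "vec (Suc n) x \<noteq> 0\<^sub>v (dim_row (toeplitz n f))"
    using nz by (auto simp: toeplitz_def vec_eq_iff)
  moreover have "vec (Suc n) x \<in> carrier_vec (dim_row (toeplitz n f))"
    by (simp add: toeplitz_def)
  ultimately show ?thesis
    unfolding eigenvalue_def eigenvector_def by blast
qed

lemma min_eig_le_rayleigh:
  "min_eig n f * sq_norm (Suc n) v \<le> Re (sesq_form (\<lambda>j k. covar f (int k - int j)) (Suc n) v v)"
proof -
  obtain m x where nz: "\<exists>i<Suc n. x i \<noteq> 0"
    and eig: "\<forall>j<Suc n. (\<Sum>k<Suc n. covar f (int k - int j) * x k) = complex_of_real m * x j"
    and bound: "\<forall>v. m * sq_norm (Suc n) v \<le> Re (sesq_form (\<lambda>j k. covar f (int k - int j)) (Suc n) v v)"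
    using hermitian_min_eigenpair[of "Suc n" "\<lambda>j k. covar f (int k - int j)"] by (auto simp: cnj_covar)
  have "eigenvalue (toeplitz n f) (complex_of_real m)"
    using nz eig by (intro eigenvalue_toeplitz_if_eigenvector) auto
  then have "min_eig n f \<le> m"
    unfolding min_eig_def by (intro Min_le finite_real_eigenvalues_toeplitz) auto
  then have "min_eig n f * sq_norm (Suc n) v \<le> m * sq_norm (Suc n) v"
    by (intro mult_right_mono sq_norm_nonneg)
  also have "\<dots> \<le> Re (sesq_form (\<lambda>j k. covar f (int k - int j)) (Suc n) v v)"
    using bound by blast
  finally show ?thesis .
qed

lemma set_integrable_cis_mult:
  assumes "set_integrable lborel S f"
  shows "set_integrable lborel S (\<lambda>l. cis (a * l) * complex_of_real (f l))"
proof (rule set_integrable_bound[OF assms])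
  have "continuous_on UNIV (\<lambda>l. cis (a * l))" by (intro continuous_intros)
  then have "(\<lambda>l. cis (a * l)) \<in> borel_measurable lborel"
    by (simp add: borel_measurable_continuous_onI)
  moreover have "(\<lambda>l. indicator S l *\<^sub>R f l) \<in> borel_measurable lborel"
    using assms unfolding set_integrable_def by (rule borel_measurable_integrable)
  ultimately have "(\<lambda>l. cis (a * l) * complex_of_real (indicator S l *\<^sub>R f l)) \<in> borel_measurable lborel"
    by measurable
  moreover have "(\<lambda>l. cis (a * l) * complex_of_real (indicator S l *\<^sub>R f l)) =
      (\<lambda>l. indicator S l *\<^sub>R (cis (a * l) * complex_of_real (f l)))"
    by (auto simp: indicator_def)
  ultimately show "set_borel_measurable lborel S (\<lambda>l. cis (a * l) * complex_of_real (f l))"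
    unfolding set_borel_measurable_def by simp
qed (simp add: norm_mult)

lemma set_integral_sum:
  fixes f :: "'i \<Rightarrow> 'a \<Rightarrow> 'b::{banach, second_countable_topology}"
  assumes "\<And>i. i \<in> I \<Longrightarrow> set_integrable M A (f i)"
  shows "(LINT x:A|M. \<Sum>i\<in>I. f i x) = (\<Sum>i\<in>I. LINT x:A|M. f i x)"
  using assms unfolding set_lebesgue_integral_def set_integrable_def
  by (simp add: scaleR_sum_right Bochner_Integration.integral_sum)

lemma set_integrable_sum:
  fixes f :: "'i \<Rightarrow> 'a \<Rightarrow> 'b::{banach, second_countable_topology}"
  assumes "\<And>i. i \<in> I \<Longrightarrow> set_integrable M A (f i)"
  shows "set_integrable M A (\<lambda>x. \<Sum>i\<in>I. f i x)"
  using assms unfolding set_integrable_def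
  by (simp add: scaleR_sum_right Bochner_Integration.integrable_sum)

lemma sum_sum_cnj_cis_eq_sq_norm:
  "(\<Sum>j<N. \<Sum>k<N. cnj (v j) * v k * cis (- real_of_int (int k - int j) * l)) =
   complex_of_real ((cmod (\<Sum>k<N. v k * cis (- real k * l)))\<^sup>2)"
proof -
  define c where "c = (\<lambda>k::nat. cis (- real k * l))"
  have "cis (- real_of_int (int k - int j) * l) = cnj (c j) * c k" for j k
    unfolding c_def by (simp add: cis_cnj cis_mult algebra_simps)
  then have "(\<Sum>j<N. \<Sum>k<N. cnj (v j) * v k * cis (- real_of_int (int k - int j) * l)) =
      (\<Sum>j<N. \<Sum>k<N. cnj (v j * c j) * (v k * c k))"
    by (simp add: mult_ac)
  also have "\<dots> = cnj (\<Sum>j<N. v j * c j) * (\<Sum>k<N. v k * c k)"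
    by (simp add: sum_product cnj_sum)
  also have "\<dots> = complex_of_real ((cmod (\<Sum>k<N. v k * c k))\<^sup>2)"
    unfolding complex_norm_square by (rule mult.commute)
  finally show ?thesis unfolding c_def .
qed

lemma sesq_form_toeplitz_eq_integral:
  assumes f: "set_integrable lborel {-pi..pi} f"
  shows "sesq_form (\<lambda>j k. covar f (int k - int j)) N v v =
    (LINT l:{-pi..pi}|lborel. complex_of_real (f l * (cmod (\<Sum>k<N. v k * cis (- real k * l)))\<^sup>2))"
proof -
  define g where "g = (\<lambda>j k l. cnj (v j) * v k * (cis (- real_of_int (int k - int j) * l) * complex_of_real (f l)))"
  have g: "set_integrable lborel {-pi..pi} (g j k)" for j k
    unfolding g_def by (intro set_integrable_mult_right set_integrable_cis_mult f)
  have "sesq_form (\<lambda>j k. covar f (int k - int j)) N v v = (\<Sum>j<N. \<Sum>k<N. LINT l:{-pi..pi}|lborel. g j k l)"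
    unfolding sesq_form_def covar_def g_def set_integral_mult_right by (simp add: mult_ac)
  also have "\<dots> = (LINT l:{-pi..pi}|lborel. \<Sum>j<N. \<Sum>k<N. g j k l)"
    using g by (simp add: set_integral_sum set_integrable_sum)
  also have "\<dots> = (LINT l:{-pi..pi}|lborel. complex_of_real (f l * (cmod (\<Sum>k<N. v k * cis (- real k * l)))\<^sup>2))"
  proof (rule arg_cong[where f = "set_lebesgue_integral _ _"], rule ext)
    fix l
    have "(\<Sum>j<N. \<Sum>k<N. g j k l) =
        (\<Sum>j<N. \<Sum>k<N. cnj (v j) * v k * cis (- real_of_int (int k - int j) * l)) * complex_of_real (f l)"
      unfolding g_def sum_distrib_right by (simp add: mult.assoc)
    then show "(\<Sum>j<N. \<Sum>k<N. g j k l) = complex_of_real (f l * (cmod (\<Sum>k<N. v k * cis (- real k * l)))\<^sup>2)"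
      unfolding sum_sum_cnj_cis_eq_sq_norm by (simp add: mult.commute)
  qed
  finally show ?thesis .
qed

lemma integral_spectral_density_nonneg:
  assumes "spectral_density f"
  shows "0 \<le> (LINT l:{-pi..pi}|lborel. f l)"
  using assms unfolding spectral_density_def set_lebesgue_integral_def
  by (intro Bochner_Integration.integral_nonneg) (auto simp: indicator_def)

lemma min_eig_le_integral_if_trig_poly_le_one:
  assumes sd: "spectral_density f"
    and bnd: "\<And>l. l \<in> {-pi..pi} \<Longrightarrow> 0 < f l \<Longrightarrow> cmod (\<Sum>k<Suc n. v k * cis (- real k * l)) \<le> 1"
  shows "min_eig n f * sq_norm (Suc n) v \<le> (LINT l:{-pi..pi}|lborel. f l)"
proof -
  have f: "set_integrable lborel {-pi..pi} f" and f0: "\<And>l. l \<in> {-pi..pi} \<Longrightarrow> 0 \<le> f l"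
    using sd unfolding spectral_density_def by auto
  have "min_eig n f * sq_norm (Suc n) v \<le> Re (sesq_form (\<lambda>j k. covar f (int k - int j)) (Suc n) v v)"
    by (rule min_eig_le_rayleigh)
  also have "\<dots> = (LINT l:{-pi..pi}|lborel. f l * (cmod (\<Sum>k<Suc n. v k * cis (- real k * l)))\<^sup>2)"
    unfolding sesq_form_toeplitz_eq_integral[OF f] set_integral_complex_of_real by simp
  also have "\<dots> \<le> (LINT l:{-pi..pi}|lborel. f l)"
    unfolding set_lebesgue_integral_def
  proof (rule integral_mono')
    show "integrable lborel (\<lambda>l. indicator {-pi..pi} l *\<^sub>R f l)"
      using f unfolding set_integrable_def .
    fix l
    show "0 \<le> indicator {-pi..pi} l *\<^sub>R f l"
      using f0 by (simp add: indicator_def)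
    have "f l * (cmod (\<Sum>k<Suc n. v k * cis (- real k * l)))\<^sup>2 \<le> f l" if "l \<in> {-pi..pi}"
      using bnd[OF that] f0[OF that] by (cases "f l = 0") (auto intro: mult_left_le power_le_one)
    then show "indicator {-pi..pi} l *\<^sub>R (f l * (cmod (\<Sum>k<Suc n. v k * cis (- real k * l)))\<^sup>2)
        \<le> indicator {-pi..pi} l *\<^sub>R f l"
      by (simp add: indicator_def)
  qed
  finally show ?thesis .
qed

text \<open>For \<open>S(y) = y \<cdot> cos t\<close> this evaluates to \<open>y\<^sup>m cos (m t)\<close>, i.e. \<open>cheb_homog S m\<close>
  is \<open>y\<^sup>m T\<^sub>m(S(y)/y)\<close> with \<open>T\<^sub>m\<close> the Chebyshev polynomial of the first kind.\<close>
fun cheb_homog :: "'a::comm_ring_1 poly \<Rightarrow> nat \<Rightarrow> 'a poly" where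
  "cheb_homog S 0 = 1"
| "cheb_homog S (Suc 0) = S"
| "cheb_homog S (Suc (Suc m)) = Polynomial.smult 2 (S * cheb_homog S (Suc m)) - monom 1 2 * cheb_homog S m"

lemma cos_mult_Suc_Suc:
  "cos (real (Suc (Suc m)) * t) = 2 * cos t * cos (real (Suc m) * t) - cos (real m * t)"
proof -
  have "cos (real (Suc m) * t + t) + cos (real (Suc m) * t - t) = 2 * cos t * cos (real (Suc m) * t)"
    by (simp add: cos_add cos_diff)
  then show ?thesis by (simp add: algebra_simps)
qed

lemma poly_cheb_homog:
  fixes y :: "'a::{real_algebra_1, comm_ring_1}"
  assumes "poly S y = y * of_real (cos t)"
  shows "poly (cheb_homog S m) y = y ^ m * of_real (cos (real m * t))"
proof (induction m rule: induct_nat_012)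
  case (ge2 m)
  show ?case
    unfolding cos_mult_Suc_Suc using assms ge2
    by (simp add: poly_monom algebra_simps power2_eq_square)
qed (use assms in simp_all)

lemma degree_lead_coeff_cheb_homog:
  fixes S :: "'a::{idom, ring_char_0} poly"
  assumes "degree S = 2" and "lead_coeff S = s" and "s \<noteq> 0"
  shows "degree (cheb_homog S m) = 2 * m \<and> lead_coeff (cheb_homog S m) = (if m = 0 then 1 else s * (2 * s) ^ (m - 1))"
proof (induction m rule: induct_nat_012)
  case (ge2 m)
  then have d0: "degree (cheb_homog S m) = 2 * m"
    and d1: "degree (cheb_homog S (Suc m)) = 2 * Suc m"
    and l1: "lead_coeff (cheb_homog S (Suc m)) = s * (2 * s) ^ m" by auto
  define A where "A = Polynomial.smult 2 (S * cheb_homog S (Suc m))"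
  define B where "B = monom 1 2 * cheb_homog S m"
  have "cheb_homog S (Suc m) \<noteq> 0" "S \<noteq> 0"
    using l1 assms by auto
  then have dA: "degree A = 2 * Suc (Suc m)"
    unfolding A_def using assms d1 by (simp add: degree_mult_eq)
  have lA: "lead_coeff A = s * (2 * s) ^ Suc m"
    unfolding A_def lead_coeff_smult lead_coeff_mult assms(2) l1 by (simp add: mult_ac)
  have "degree B \<le> 2 + 2 * m"
    unfolding B_def using degree_mult_le[of "monom 1 2" "cheb_homog S m"] d0 by (simp add: degree_monom_eq)
  then have lt: "degree (- B) < degree A" using dA by simp
  have "cheb_homog S (Suc (Suc m)) = - B + A" unfolding A_def B_def by simp
  then show ?case using degree_add_eq_left[OF lt] lead_coeff_add_le[OF lt] dA lA by simp
qed (use assms in simp_all)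

lemma cis_mult_self_plus_one: "cis \<phi> * cis \<phi> + 1 = cis \<phi> * complex_of_real (2 * cos \<phi>)"
proof -
  have "(sin \<phi>)\<^sup>2 = 1 - (cos \<phi>)\<^sup>2" by (simp add: sin_squared_eq)
  then show ?thesis by (simp add: complex_eq_iff power2_eq_square algebra_simps)
qed

text \<open>On the arc, \<open>S(y) = (y\<^sup>2 - 2 c y + 1) / (2 r)\<close> equals \<open>y cos t\<close> for a real \<open>t\<close>.\<close>
lemma poly_bounded_on_arc_with_large_lead_coeff:
  fixes c r :: real
  assumes r: "0 < r"
  obtains P :: "complex poly"
  where "degree P = 2 * k"
    and "1 / (4 * r ^ (2 * k)) \<le> (cmod (lead_coeff P))\<^sup>2"
    and "\<And>\<phi>. c - r \<le> cos \<phi> \<Longrightarrow> cos \<phi> \<le> c + r \<Longrightarrow> cmod (poly P (cis \<phi>)) \<le> 1"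
proof
  define s where "s = complex_of_real (1 / (2 * r))"
  have s0: "s \<noteq> 0" unfolding s_def using r by simp
  define S where "S = Polynomial.smult s [:1, - complex_of_real (2 * c), 1:]"
  have "degree S = 2" "lead_coeff S = s" unfolding S_def using s0 by simp_all
  from degree_lead_coeff_cheb_homog[OF this s0, of k]
  have dP: "degree (cheb_homog S k) = 2 * k"
    and lP: "lead_coeff (cheb_homog S k) = (if k = 0 then 1 else s * (2 * s) ^ (k - 1))"
    by auto
  show "degree (cheb_homog S k) = 2 * k" by (rule dP)
  show "1 / (4 * r ^ (2 * k)) \<le> (cmod (lead_coeff (cheb_homog S k)))\<^sup>2"
  proof (cases k)
    case 0
    then show ?thesis using lP by simp
  next
    case (Suc j)
    have "cmod (lead_coeff (cheb_homog S k)) = 1 / (2 * r) * (1 / r) ^ j"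
      using lP r Suc unfolding s_def by (simp add: norm_mult norm_power norm_divide)
    also have "\<dots> = 1 / (2 * r ^ k)" using r Suc by (simp add: field_simps)
    finally show ?thesis by (simp add: power_even_eq power_divide power_mult_distrib)
  qed
  fix \<phi> assume lo: "c - r \<le> cos \<phi>" and hi: "cos \<phi> \<le> c + r"
  define t where "t = arccos ((cos \<phi> - c) / r)"
  have ct: "cos t = (cos \<phi> - c) / r"
    unfolding t_def using lo hi r by (intro cos_arccos) (auto simp: field_simps)
  have "poly S (cis \<phi>) = s * (cis \<phi> * cis \<phi> + 1 - complex_of_real (2 * c) * cis \<phi>)"
    unfolding S_def by (simp add: algebra_simps)
  also have "\<dots> = cis \<phi> * complex_of_real (cos t)"
    unfolding cis_mult_self_plus_one ct s_def using r by (simp add: field_simps)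
  finally have "poly (cheb_homog S k) (cis \<phi>) = cis \<phi> ^ k * complex_of_real (cos (real k * t))"
    by (rule poly_cheb_homog)
  then show "cmod (poly (cheb_homog S k) (cis \<phi>)) \<le> 1"
    by (simp add: norm_mult norm_power)
qed

lemma poly_eq_sum_lessThan:
  fixes x :: "'a::comm_semiring_1"
  assumes "degree p < N"
  shows "poly p x = (\<Sum>i<N. coeff p i * x ^ i)"
  unfolding poly_altdef using assms
  by (intro sum.mono_neutral_left) (auto simp: coeff_eq_0)

lemma sum_coeff_cis_eq_poly_cis:
  assumes "degree P < N"
  shows "(\<Sum>j<N. coeff P j * cis (real j * \<theta>) * cis (- real j * l)) = poly P (cis (\<theta> - l))"
proof -
  have "(\<Sum>j<N. coeff P j * cis (real j * \<theta>) * cis (- real j * l)) = (\<Sum>j<N. coeff P j * cis (\<theta> - l) ^ j)"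
    unfolding Complex.DeMoivre by (intro sum.cong refl) (simp add: cis_mult algebra_simps)
  also have "\<dots> = poly P (cis (\<theta> - l))"
    using assms by (rule poly_eq_sum_lessThan[symmetric])
  finally show ?thesis .
qed

lemma cos_bounds_if_cis_in_Gamma_two_arcs:
  assumes "cis l \<in> Gamma_two_arcs \<alpha> \<delta> \<theta>0" and "0 \<le> \<delta>" and "\<alpha> + \<delta> \<le> pi"
  shows "cos (\<delta> + \<alpha>) \<le> cos (\<theta>0 - l) \<and> cos (\<theta>0 - l) \<le> cos \<delta>"
proof -
  obtain \<theta> where eq: "cis l = cis \<theta>" and lo: "\<delta> \<le> \<bar>\<theta> - \<theta>0\<bar>" and hi: "\<bar>\<theta> - \<theta>0\<bar> \<le> \<delta> + \<alpha>"
    using assms(1) unfolding Gamma_two_arcs_def by blast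
  have "cos l = cos \<theta>" "sin l = sin \<theta>"
    using arg_cong[OF eq, of Re] arg_cong[OF eq, of Im] by simp_all
  then have "cos (\<theta>0 - l) = cos \<bar>\<theta> - \<theta>0\<bar>"
    by (simp add: cos_diff cos_abs_real[of "\<theta> - \<theta>0"] mult.commute)
  moreover have "cos (\<delta> + \<alpha>) \<le> cos \<bar>\<theta> - \<theta>0\<bar>" "cos \<bar>\<theta> - \<theta>0\<bar> \<le> cos \<delta>"
    using lo hi assms(2,3) by (intro cos_monotone_0_pi_le; simp)+
  ultimately show ?thesis by simp
qed

lemma min_eig_le_two_arcs_bound:
  assumes sd: "spectral_density f" and \<alpha>: "0 < \<alpha>" and \<delta>: "0 \<le> \<delta>" "\<alpha> + \<delta> \<le> pi"
    and E: "E_set f \<subseteq> Gamma_two_arcs \<alpha> \<delta> \<theta>0"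
  shows "min_eig n f \<le> 4 * (LINT l:{-pi..pi}|lborel. f l) * (sin (\<alpha>/2) * sin (\<alpha>/2 + \<delta>)) ^ (2 * (n div 2))"
proof -
  define r where "r = sin (\<alpha>/2) * sin (\<alpha>/2 + \<delta>)"
  define c where "c = cos (\<alpha>/2) * cos (\<alpha>/2 + \<delta>)"
  define I where "I = (LINT l:{-pi..pi}|lborel. f l)"
  define k where "k = n div 2"
  have r: "0 < r" unfolding r_def using \<alpha> \<delta> by (intro mult_pos_pos sin_gt_zero) auto
  have "cos \<delta> = cos ((\<alpha>/2 + \<delta>) - \<alpha>/2)" "cos (\<delta> + \<alpha>) = cos ((\<alpha>/2 + \<delta>) + \<alpha>/2)"
    by (simp_all add: algebra_simps)
  then have cos_\<delta>: "cos \<delta> = c + r" and cos_\<delta>\<alpha>: "cos (\<delta> + \<alpha>) = c - r"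
    unfolding cos_diff cos_add c_def r_def by (simp_all add: mult_ac)
  obtain P where dP: "degree P = 2 * k" and lP: "1 / (4 * r ^ (2 * k)) \<le> (cmod (lead_coeff P))\<^sup>2"
    and bnd: "\<And>\<phi>. c - r \<le> cos \<phi> \<Longrightarrow> cos \<phi> \<le> c + r \<Longrightarrow> cmod (poly P (cis \<phi>)) \<le> 1"
    using poly_bounded_on_arc_with_large_lead_coeff[OF r] by blast
  define v where "v = (\<lambda>j. coeff P j * cis (real j * \<theta>0))"
  have "cmod (\<Sum>j<Suc n. v j * cis (- real j * l)) \<le> 1" if l: "l \<in> {-pi..pi}" "0 < f l" for l
  proof -
    have "cis l \<in> Gamma_two_arcs \<alpha> \<delta> \<theta>0"
      using E l unfolding E_set_def by blast
    moreover have "(\<Sum>j<Suc n. v j * cis (- real j * l)) = poly P (cis (\<theta>0 - l))"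
      unfolding v_def using dP k_def by (intro sum_coeff_cis_eq_poly_cis) simp
    ultimately show ?thesis
      using cos_bounds_if_cis_in_Gamma_two_arcs[OF _ \<delta>] bnd cos_\<delta> cos_\<delta>\<alpha> by simp
  qed
  then have le_I: "min_eig n f * sq_norm (Suc n) v \<le> I"
    unfolding I_def by (rule min_eig_le_integral_if_trig_poly_le_one[OF sd])
  have "1 / (4 * r ^ (2 * k)) \<le> (cmod (v (2 * k)))\<^sup>2"
    using lP dP by (simp add: v_def norm_mult)
  also have "\<dots> \<le> sq_norm (Suc n) v"
    unfolding k_def by (intro sq_cmod_le_sq_norm) simp
  finally have v_large: "1 / (4 * r ^ (2 * k)) \<le> sq_norm (Suc n) v" .
  have I0: "0 \<le> I"
    unfolding I_def by (rule integral_spectral_density_nonneg[OF sd])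
  have "0 \<le> 4 * I * r ^ (2 * k)" using I0 r by simp
  moreover have "min_eig n f \<le> 4 * I * r ^ (2 * k)" if "0 < min_eig n f"
  proof -
    have "min_eig n f * (1 / (4 * r ^ (2 * k))) \<le> I"
      using mult_left_mono[OF v_large, of "min_eig n f"] that le_I by linarith
    then show ?thesis using r by (simp add: field_simps)
  qed
  ultimately show ?thesis unfolding I_def[symmetric] r_def[symmetric] k_def[symmetric] by linarith
qed

lemma limsup_root_le_if_eventually_le_geometric:
  fixes x :: "nat \<Rightarrow> real"
  assumes C: "0 < C" and r: "0 < r" and le: "\<forall>\<^sub>F n in sequentially. x n \<le> C * r ^ n"
  shows "limsup (\<lambda>n. ereal (root n (x n))) \<le> ereal r"
proof -
  have "\<forall>\<^sub>F n in sequentially. ereal (root n (x n)) \<le> ereal (root n C * r)"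
    using le eventually_gt_at_top[of 0]
  proof eventually_elim
    case (elim n)
    then have "root n (x n) \<le> root n (C * r ^ n)" by simp
    also have "\<dots> = root n C * r" using elim r by (simp add: real_root_mult real_root_power_cancel)
    finally show ?case by simp
  qed
  then have "limsup (\<lambda>n. ereal (root n (x n))) \<le> limsup (\<lambda>n. ereal (root n C * r))"
    by (rule Limsup_mono)
  also have "(\<lambda>n. root n C * r) \<longlonglongrightarrow> 1 * r"
    by (intro tendsto_intros LIMSEQ_root_const C)
  then have "limsup (\<lambda>n. ereal (root n C * r)) = ereal r"
    by (intro lim_imp_Limsup) (simp_all add: tendsto_ereal)
  finally show ?thesis .
qed

lemma limsup_root_min_eig_le_two_arcs:
  assumes sd: "spectral_density f" and \<alpha>: "0 < \<alpha>" and \<delta>: "0 \<le> \<delta>" "\<alpha> + \<delta> \<le> pi"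
    and E: "E_set f \<subseteq> Gamma_two_arcs \<alpha> \<delta> \<theta>0"
  shows "limsup (\<lambda>n. ereal (root n (min_eig n f))) \<le> ereal (sin (\<alpha>/2) * sin (\<alpha>/2 + \<delta>))"
proof -
  define r where "r = sin (\<alpha>/2) * sin (\<alpha>/2 + \<delta>)"
  define I where "I = (LINT l:{-pi..pi}|lborel. f l)"
  have r: "0 < r" unfolding r_def using \<alpha> \<delta> by (intro mult_pos_pos sin_gt_zero) auto
  have r1: "r \<le> 1" unfolding r_def by (intro mult_le_one sin_le_one) (use \<alpha> \<delta> in \<open>auto intro: sin_ge_zero\<close>)
  have I0: "0 \<le> I"
    unfolding I_def by (rule integral_spectral_density_nonneg[OF sd])
  have C: "0 < 4 * I / r + 1" using I0 r by (intro add_nonneg_pos divide_nonneg_pos) auto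
  have "\<forall>\<^sub>F n in sequentially. min_eig n f \<le> (4 * I / r + 1) * r ^ n"
  proof (intro always_eventually allI)
    fix n
    have "r ^ (2 * (n div 2)) * r \<le> r ^ n"
      unfolding power_Suc2[symmetric] using r r1 by (intro power_decreasing) auto
    then have "4 * I * r ^ (2 * (n div 2)) \<le> 4 * I / r * r ^ n"
      using I0 r by (simp add: field_simps mult_left_mono)
    also have "\<dots> \<le> (4 * I / r + 1) * r ^ n" using r by (simp add: distrib_right)
    finally show "min_eig n f \<le> (4 * I / r + 1) * r ^ n"
      using min_eig_le_two_arcs_bound[OF sd \<alpha> \<delta> E, of n] unfolding I_def r_def by linarith
  qed
  from limsup_root_le_if_eventually_le_geometric[OF C r this] show ?thesis unfolding r_def .
qed

theorem mainTheorem18: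
  fixes f :: "real \<Rightarrow> real" and \<theta>0 :: real
  assumes sd: "spectral_density f"
    and th: "-pi \<le> \<theta>0" "\<theta>0 < pi"
  shows "(\<forall>\<alpha>. 0 < \<alpha> \<and> \<alpha> < pi \<and> closure (E_set f) = Gamma_arc \<alpha> \<theta>0 \<longrightarrow>
            limsup (\<lambda>n. ereal (root n (min_eig n f))) \<le> ereal ((sin (\<alpha>/2))\<^sup>2))
       \<and> (\<forall>\<alpha> \<delta>. 0 < \<alpha> \<and> 0 \<le> \<delta> \<and> \<alpha> + \<delta> \<le> pi \<and> closure (E_set f) = Gamma_two_arcs \<alpha> \<delta> \<theta>0 \<longrightarrow>
            limsup (\<lambda>n. ereal (root n (min_eig n f))) \<le> ereal (sin (\<alpha>/2) * sin (\<alpha>/2 + \<delta>)))"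
proof (intro conjI allI impI)
  fix \<alpha> assume h: "0 < \<alpha> \<and> \<alpha> < pi \<and> closure (E_set f) = Gamma_arc \<alpha> \<theta>0"
  have "Gamma_arc \<alpha> \<theta>0 = Gamma_two_arcs \<alpha> 0 \<theta>0"
    unfolding Gamma_arc_def Gamma_two_arcs_def by simp
  then have "E_set f \<subseteq> Gamma_two_arcs \<alpha> 0 \<theta>0"
    using h closure_subset by metis
  from limsup_root_min_eig_le_two_arcs[OF sd _ _ _ this]
  show "limsup (\<lambda>n. ereal (root n (min_eig n f))) \<le> ereal ((sin (\<alpha>/2))\<^sup>2)"
    using h by (simp add: power2_eq_square)
next
  fix \<alpha> \<delta> assume h: "0 < \<alpha> \<and> 0 \<le> \<delta> \<and> \<alpha> + \<delta> \<le> pi \<and> closure (E_set f) = Gamma_two_arcs \<alpha> \<delta> \<theta>0"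
  then have "E_set f \<subseteq> Gamma_two_arcs \<alpha> \<delta> \<theta>0"
    using closure_subset by metis
  with h sd show "limsup (\<lambda>n. ereal (root n (min_eig n f))) \<le> ereal (sin (\<alpha>/2) * sin (\<alpha>/2 + \<delta>))"
    by (intro limsup_root_min_eig_le_two_arcs) auto
qed

end
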